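(* Let $n\ge1$ and $1\le k\le n$, and assume either $n$ is even, or $n$ is odd and $k\ge2$. Let $e$ be the greatest even integer with $e\le n-k+1$. Then $$\sup\{\operatorname{per}(I-A): A\in\omega_{n,k}\}=2^{e/2}\Big[1+\Big(\frac{n-k+1-e}{2}\Big)^2\Big].$$
   Context: An $n\times n$ matrix is doubly substochastic if all its entries are nonnegative and every row sum and column sum is at most $1$. $\sigma(A)$ is the sum of all entries of $A$. The sub-defect of an $n\times n$ doubly substochastic matrix $A$ is $sd(A)=\lceil n-\sigma(A)\rceil$ (equivalently, the least $k$ such that $A$ is a submatrix of some $(n+k)\times(n+k)$ doubly stochastic matrix), and $\omega_{n,k}$ is the set of $n\times n$ doubly substochastic matrices with sub-defect $k$; thus for $k\ge1$, $\omega_{n,k}=\{A: n-k\le\sigma(A)<n-k+1\}$. The permanent is $\operatorname{per}(M)=\sum_{\pi\in S_n}\prod_i m_{i\pi(i)}$, and $I$ is the identity matrix. *)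

theory Defs
  imports "HOL-Combinatorics.Permutations" Complex_Main
begin

text \<open>n x n real matrices are represented as functions nat => nat => real,
  with indices ranging over {..<n}.\<close>

definition per :: "nat \<Rightarrow> (nat \<Rightarrow> nat \<Rightarrow> real) \<Rightarrow> real" where
  "per n M = (\<Sum>p\<in>{p. p permutes {..<n}}. \<Prod>i<n. M i (p i))"

definition idm :: "nat \<Rightarrow> nat \<Rightarrow> real" where
  "idm i j = (if i = j then 1 else 0)"

definition doubly_substochastic :: "nat \<Rightarrow> (nat \<Rightarrow> nat \<Rightarrow> real) \<Rightarrow> bool" where
  "doubly_substochastic n A \<longleftrightarrow>
     (\<forall>i j. (i < n \<and> j < n \<longrightarrow> 0 \<le> A i j) \<and> (\<not> (i < n \<and> j < n) \<longrightarrow> A i j = 0)) \<and>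
     (\<forall>i<n. (\<Sum>j<n. A i j) \<le> 1) \<and>
     (\<forall>j<n. (\<Sum>i<n. A i j) \<le> 1)"

definition sigma_sum :: "nat \<Rightarrow> (nat \<Rightarrow> nat \<Rightarrow> real) \<Rightarrow> real" where
  "sigma_sum n A = (\<Sum>i<n. \<Sum>j<n. A i j)"

definition sub_defect :: "nat \<Rightarrow> (nat \<Rightarrow> nat \<Rightarrow> real) \<Rightarrow> int" where
  "sub_defect n A = \<lceil>real n - sigma_sum n A\<rceil>"

definition omega :: "nat \<Rightarrow> nat \<Rightarrow> (nat \<Rightarrow> nat \<Rightarrow> real) set" where
  "omega n k = {A. doubly_substochastic n A \<and> sub_defect n A = int k}"

end

theory Submission
  imports Defs
begin

text \<open>Entrywise \<open>|I - A| \<le> I + B\<close>, where \<open>B\<close> is the off-diagonal part of \<open>A\<close>; so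
  \<open>per (I - A) \<le> per (I + B)\<close> with \<open>B\<close> hollow, doubly substochastic and
  \<open>\<sigma>(B) \<le> \<sigma>(A) < n - k + 1\<close>. By induction on the size, \<open>per (I + B) \<le> h (\<sigma>(B))\<close> for
  \<open>h s = 2^\<lfloor>s/2\<rfloor> (1 + ((s - 2\<lfloor>s/2\<rfloor>)/2)\<^sup>2)\<close>: expanding along the last row and
  absorbing the last row \<open>v\<close> and column \<open>u\<close> into the rank-one update \<open>B + u v\<^sup>T\<close> of the
  leading block costs a factor \<open>\<Prod>(1 + u\<^sub>i v\<^sub>i) \<le> h(\<delta>)\<close> with \<open>\<delta> \<le> 2\<close>, and
  \<open>h x \<cdot> h \<delta> \<le> h (x + \<delta>)\<close>. Conversely, block diagonal matrices with \<open>2 \<times> 2\<close> blocks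
  \<open>[[0,t],[t,0]]\<close>, plus one block \<open>[[0,t/2],[t/2,0]]\<close> when \<open>n - k + 1\<close> is odd, lie in
  \<open>omega n k\<close> for \<open>t < 1\<close> close to \<open>1\<close> and their permanents tend to the bound; the parity
  hypothesis is exactly what leaves room for the extra block.\<close>

lemma per_cong:
  assumes "\<And>i j. i < n \<Longrightarrow> j < n \<Longrightarrow> M i j = N i j"
  shows "per n M = per n N"
  unfolding per_def
proof (rule sum.cong[OF refl])
  fix p assume "p \<in> {p. p permutes {..<n}}"
  hence p: "p permutes {..<n}" by simp
  show "(\<Prod>i<n. M i (p i)) = (\<Prod>i<n. N i (p i))"
    by (rule prod.cong[OF refl]) (use assms permutes_in_image[OF p] in auto)
qed

lemma per_0 [simp]: "per 0 M = 1"
  unfolding per_def by (simp add: permutes_empty)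

lemma per_scale_rows: "per n (\<lambda>i j. c i * M i j) = (\<Prod>i<n. c i) * per n M"
  unfolding per_def by (simp add: prod.distrib sum_distrib_left)

lemma per_mono:
  assumes "\<And>i j. i < n \<Longrightarrow> j < n \<Longrightarrow> 0 \<le> M i j \<and> M i j \<le> N i j"
  shows "per n M \<le> per n N"
  unfolding per_def
proof (rule sum_mono)
  fix p assume "p \<in> {p. p permutes {..<n}}"
  hence p: "p permutes {..<n}" by simp
  show "(\<Prod>i<n. M i (p i)) \<le> (\<Prod>i<n. N i (p i))"
    by (rule prod_mono) (use assms permutes_in_image[OF p] in auto)
qed

lemma per_le_of_abs_le:
  assumes "\<And>i j. i < n \<Longrightarrow> j < n \<Longrightarrow> \<bar>M i j\<bar> \<le> N i j"
  shows "per n M \<le> per n N"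
proof -
  have "per n M \<le> (\<Sum>p\<in>{p. p permutes {..<n}}. \<bar>\<Prod>i<n. M i (p i)\<bar>)"
    unfolding per_def by (rule sum_mono) simp
  also have "\<dots> \<le> per n N"
    unfolding per_def
  proof (rule sum_mono)
    fix p assume "p \<in> {p. p permutes {..<n}}"
    hence p: "p permutes {..<n}" by simp
    show "\<bar>\<Prod>i<n. M i (p i)\<bar> \<le> (\<Prod>i<n. N i (p i))"
      unfolding abs_prod by (rule prod_mono) (use assms permutes_in_image[OF p] in auto)
  qed
  finally show ?thesis .
qed

lemma per_expand_last_row:
  "per (Suc n) M = (\<Sum>b\<le>n. M n b * per n (\<lambda>i l. if l = b then M i n else M i l))"
proof -
  have ins: "{..<Suc n} = insert n {..<n}" "insert n {..<n} = {..n}" by auto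
  have entry: "(\<Prod>i<Suc n. M i ((transpose n b \<circ> q) i)) =
      M n b * (\<Prod>i<n. if q i = b then M i n else M i (q i))"
    if b: "b \<le> n" and q: "q permutes {..<n}" for b q
  proof -
    have "(\<Prod>i<n. M i ((transpose n b \<circ> q) i)) = (\<Prod>i<n. if q i = b then M i n else M i (q i))"
    proof (rule prod.cong[OF refl])
      fix i assume "i \<in> {..<n}"
      hence "q i < n" using permutes_in_image[OF q] by auto
      thus "M i ((transpose n b \<circ> q) i) = (if q i = b then M i n else M i (q i))"
        by (auto simp: transpose_def)
    qed
    moreover have "q n = n" using q by (simp add: permutes_not_in)
    ultimately show ?thesis by (simp add: prod.lessThan_Suc mult.commute)
  qed
  have "per (Suc n) M = (\<Sum>b\<in>insert n {..<n}. \<Sum>q\<in>{p. p permutes {..<n}}.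
          \<Prod>i<Suc n. M i ((transpose n b \<circ> q) i))"
    unfolding per_def ins(1) by (subst sum_over_permutations_insert) (auto simp: ins(1)[symmetric])
  also have "\<dots> = (\<Sum>b\<le>n. M n b * per n (\<lambda>i l. if l = b then M i n else M i l))"
    unfolding ins(2) per_def sum_distrib_left by (intro sum.cong refl) (auto simp only: entry)
  finally show ?thesis .
qed

lemma per_last_row_diagonal:
  assumes "\<And>b. b < n \<Longrightarrow> M n b = 0"
  shows "per (Suc n) M = M n n * per n M"
proof -
  have "per n (\<lambda>i l. if l = n then M i n else M i l) = per n M"
    by (rule per_cong) auto
  thus ?thesis using assms by (simp add: per_expand_last_row flip: lessThan_Suc_atMost)
qed

lemma prod_add_ge_first_order:
  fixes x y :: "nat \<Rightarrow> real"
  assumes "finite I" "\<And>i. i \<in> I \<Longrightarrow> 0 \<le> x i" "\<And>i. i \<in> I \<Longrightarrow> 0 \<le> y i"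
  shows "(\<Prod>i\<in>I. x i) + (\<Sum>k\<in>I. y k * (\<Prod>i\<in>I-{k}. x i)) \<le> (\<Prod>i\<in>I. x i + y i)"
  using assms
proof (induction I rule: finite_induct)
  case empty
  then show ?case by simp
next
  case (insert a I)
  have xa: "0 \<le> x a" and ya: "0 \<le> y a" using insert by auto
  have IH: "(\<Prod>i\<in>I. x i) + (\<Sum>k\<in>I. y k * (\<Prod>i\<in>I-{k}. x i)) \<le> (\<Prod>i\<in>I. x i + y i)"
    using insert by auto
  have sum_nonneg: "0 \<le> (\<Sum>k\<in>I. y k * (\<Prod>i\<in>I-{k}. x i))"
    using insert by (auto intro!: sum_nonneg mult_nonneg_nonneg prod_nonneg)
  have "(\<Sum>k\<in>I. y k * (\<Prod>i\<in>insert a I-{k}. x i)) = (\<Sum>k\<in>I. y k * (x a * (\<Prod>i\<in>I-{k}. x i)))"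
  proof (rule sum.cong[OF refl])
    fix k assume "k \<in> I"
    hence "insert a I - {k} = insert a (I - {k})" using insert by auto
    thus "y k * (\<Prod>i\<in>insert a I-{k}. x i) = y k * (x a * (\<Prod>i\<in>I-{k}. x i))"
      using insert by simp
  qed
  moreover have "insert a I - {a} = I" using insert by auto
  ultimately have "(\<Prod>i\<in>insert a I. x i) + (\<Sum>k\<in>insert a I. y k * (\<Prod>i\<in>insert a I-{k}. x i))
     = x a * ((\<Prod>i\<in>I. x i) + (\<Sum>k\<in>I. y k * (\<Prod>i\<in>I-{k}. x i))) + y a * (\<Prod>i\<in>I. x i)"
    using insert by (simp add: sum_distrib_left algebra_simps)
  also have "\<dots> \<le> x a * (\<Prod>i\<in>I. x i + y i) + y a * (\<Prod>i\<in>I. x i + y i)"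
    using IH sum_nonneg xa ya by (intro add_mono mult_left_mono) auto
  also have "\<dots> = (\<Prod>i\<in>insert a I. x i + y i)" using insert by (simp add: algebra_simps)
  finally show ?case .
qed

text \<open>Expanding the permanent of \<open>M + u v\<^sup>T\<close> along each permutation and keeping only the
  terms of degree at most one in the rank-one perturbation.\<close>

lemma per_rank_one_update:
  fixes M :: "nat \<Rightarrow> nat \<Rightarrow> real"
  assumes M: "\<And>i j. i < n \<Longrightarrow> j < n \<Longrightarrow> 0 \<le> M i j"
    and u: "\<And>i. i < n \<Longrightarrow> 0 \<le> u i" and v: "\<And>i. i < n \<Longrightarrow> 0 \<le> v i"
  shows "per n M + (\<Sum>j<n. v j * per n (\<lambda>i l. if l = j then u i else M i l))
         \<le> per n (\<lambda>i l. M i l + u i * v l)"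
proof -
  have key: "(\<Prod>i<n. M i (q i)) + (\<Sum>j<n. v j * (\<Prod>i<n. if q i = j then u i else M i (q i)))
     \<le> (\<Prod>i<n. M i (q i) + u i * v (q i))" if q: "q permutes {..<n}" for q
  proof -
    have qi: "\<And>i. i < n \<Longrightarrow> q i < n" using permutes_in_image[OF q] by auto
    have "(\<Sum>j<n. v j * (\<Prod>i<n. if q i = j then u i else M i (q i)))
        = (\<Sum>k<n. v (q k) * (\<Prod>i<n. if q i = q k then u i else M i (q i)))"
      using sum.reindex_cong[OF permutes_inj_on[OF q] permutes_image[OF q, symmetric] refl] .
    also have "\<dots> = (\<Sum>k<n. (u k * v (q k)) * (\<Prod>i\<in>{..<n}-{k}. M i (q i)))"
    proof (rule sum.cong[OF refl])
      fix k assume k: "k \<in> {..<n}"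
      have "(\<Prod>i\<in>{..<n}-{k}. if q i = q k then u i else M i (q i)) = (\<Prod>i\<in>{..<n}-{k}. M i (q i))"
        by (rule prod.cong[OF refl]) (use permutes_inj[OF q] in \<open>auto dest: injD\<close>)
      thus "v (q k) * (\<Prod>i<n. if q i = q k then u i else M i (q i)) =
           (u k * v (q k)) * (\<Prod>i\<in>{..<n}-{k}. M i (q i))"
        using k by (simp add: prod.remove)
    qed
    finally show ?thesis
      by (simp only:) (rule prod_add_ge_first_order; auto intro!: M u v mult_nonneg_nonneg qi)
  qed
  have "per n M + (\<Sum>j<n. v j * per n (\<lambda>i l. if l = j then u i else M i l)) =
     (\<Sum>q\<in>{p. p permutes {..<n}}. (\<Prod>i<n. M i (q i)) +
        (\<Sum>j<n. v j * (\<Prod>i<n. if q i = j then u i else M i (q i))))"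
    unfolding per_def by (simp add: sum.distrib sum_distrib_left sum.swap[of _ "{..<n}"])
  also have "\<dots> \<le> per n (\<lambda>i l. M i l + u i * v l)"
    unfolding per_def by (rule sum_mono) (use key in auto)
  finally show ?thesis .
qed

lemma sum_mult_le_mult_sum:
  fixes u v :: "nat \<Rightarrow> real"
  assumes "\<And>i. i < n \<Longrightarrow> 0 \<le> u i" "\<And>i. i < n \<Longrightarrow> 0 \<le> v i"
  shows "(\<Sum>i<n. u i * v i) \<le> (\<Sum>i<n. u i) * (\<Sum>i<n. v i)"
proof -
  have "(\<Sum>i<n. u i * v i) \<le> (\<Sum>i<n. u i * (\<Sum>j<n. v j))"
  proof (rule sum_mono)
    fix i assume i: "i \<in> {..<n}"
    have "v i \<le> (\<Sum>j<n. v j)" by (rule member_le_sum) (use i assms in auto)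
    thus "u i * v i \<le> u i * (\<Sum>j<n. v j)" using i assms by (auto intro: mult_left_mono)
  qed
  thus ?thesis by (simp add: sum_distrib_right)
qed

lemma quadratic_bound_step:
  fixes D r c u v P :: real
  assumes "0 \<le> D" "D \<le> r * c" "0 \<le> r" "r \<le> 1" "0 \<le> c" "c \<le> 1" "0 \<le> u" "0 \<le> v"
    and P: "P \<le> 1 + D + (r * c - D)^2 / 4"
  shows "P * (1 + u * v) \<le> 1 + (D + u * v) + ((r + v) * (c + u) - (D + u * v))^2 / 4"
proof -
  define Y where "Y = r * c - D"
  have Y: "0 \<le> Y" "Y \<le> 1"
    using assms unfolding Y_def by (auto intro: order_trans[of _ "r * c"] mult_le_one)
  have uv: "0 \<le> u * v" using assms by simp
  have am_gm: "r * c * (u * v) \<le> (r * u + c * v)^2 / 4"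
    using sum_squares_ge_zero[of "r * u - c * v" 0] by (simp add: power2_eq_square algebra_simps)
  have "0 \<le> Y * (r * u + c * v)" using Y assms by simp
  have "Y * Y \<le> Y * 4" using Y by (intro mult_left_mono) auto
  hence "u * v * (Y^2 / 4) \<le> u * v * Y" using uv by (intro mult_left_mono) (auto simp: power2_eq_square)
  have "P * (1 + u * v) \<le> (1 + D + Y^2 / 4) * (1 + u * v)"
    using P uv unfolding Y_def by (intro mult_right_mono) auto
  also have "\<dots> = 1 + D + Y^2/4 + u * v + u * v * D + u * v * (Y^2 / 4)"
    by (simp add: algebra_simps)
  also have "\<dots> \<le> 1 + D + Y^2/4 + u * v + (u * v * D + u * v * Y)"
    using \<open>u * v * (Y^2 / 4) \<le> u * v * Y\<close> by simp
  also have "u * v * D + u * v * Y = r * c * (u * v)"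
    unfolding Y_def by (simp add: algebra_simps)
  also have "1 + D + Y^2/4 + u * v + r * c * (u * v)
      \<le> 1 + D + Y^2/4 + u * v + (r * u + c * v)^2/4 + Y * (r * u + c * v) / 2"
    using am_gm \<open>0 \<le> Y * (r * u + c * v)\<close> by linarith
  also have "\<dots> = 1 + (D + u * v) + (Y + (r * u + c * v))^2 / 4"
    by (simp add: power2_eq_square field_simps)
  also have "Y + (r * u + c * v) = (r + v) * (c + u) - (D + u * v)"
    unfolding Y_def by (simp add: algebra_simps)
  finally show ?thesis .
qed

lemma prod_one_plus_mult_le:
  fixes u v :: "nat \<Rightarrow> real"
  assumes "\<And>i. i < n \<Longrightarrow> 0 \<le> u i" "\<And>i. i < n \<Longrightarrow> 0 \<le> v i"
    and "(\<Sum>i<n. u i) \<le> 1" "(\<Sum>i<n. v i) \<le> 1"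
  shows "(\<Prod>i<n. 1 + u i * v i) \<le> 1 + (\<Sum>i<n. u i * v i)
       + ((\<Sum>i<n. v i) * (\<Sum>i<n. u i) - (\<Sum>i<n. u i * v i))^2 / 4"
  using assms
proof (induction n)
  case 0
  then show ?case by simp
next
  case (Suc n)
  have u: "\<And>i. i < n \<Longrightarrow> 0 \<le> u i" and v: "\<And>i. i < n \<Longrightarrow> 0 \<le> v i" using Suc.prems by auto
  have "(\<Sum>i<n. u i) \<le> 1" "(\<Sum>i<n. v i) \<le> 1"
    using Suc.prems(3,4) Suc.prems(1,2)[of n] by simp_all
  moreover have "0 \<le> (\<Sum>i<n. u i)" "0 \<le> (\<Sum>i<n. v i)" "0 \<le> (\<Sum>i<n. u i * v i)"
    using u v by (auto intro: sum_nonneg)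
  moreover have "(\<Sum>i<n. u i * v i) \<le> (\<Sum>i<n. v i) * (\<Sum>i<n. u i)"
    using sum_mult_le_mult_sum[of n u v] u v by (simp add: mult.commute)
  ultimately show ?case
    using quadratic_bound_step[of _ _ _ "u n" "v n"] Suc.IH[OF u v] Suc.prems(1,2)[of n] by simp
qed

lemma quadratic_bound_le_square:
  fixes r c D :: real
  assumes "0 \<le> r" "r \<le> 1" "0 \<le> c" "c \<le> 1" "0 \<le> D" "D \<le> r * c"
  shows "1 + D + (r * c - D)^2 / 4 \<le> 1 + (c + r - r * c + D)^2 / 4"
proof -
  have "(c + r - r * c + D)^2 - (r * c - D)^2 - 4 * D = (r - c)^2 + 2 * (r * c - D) * (2 - r - c)"
    by (simp add: power2_eq_square algebra_simps)
  moreover have "0 \<le> (r - c)^2 + 2 * (r * c - D) * (2 - r - c)"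
    using assms by (intro add_nonneg_nonneg mult_nonneg_nonneg) auto
  ultimately show ?thesis by (simp add: divide_right_mono)
qed

text \<open>The value of \<open>per (I + A)\<close> when \<open>A\<close> consists of \<open>\<lfloor>s/2\<rfloor>\<close> blocks \<open>[[0,1],[1,0]]\<close> and one
  block \<open>[[0,t/2],[t/2,0]]\<close> with \<open>t = s - 2\<lfloor>s/2\<rfloor>\<close>.\<close>

definition per_bound :: "real \<Rightarrow> real" where
  "per_bound s = 2 ^ nat \<lfloor>s/2\<rfloor> * (1 + ((s - 2 * of_int \<lfloor>s/2\<rfloor>)/2)^2)"

lemma per_bound_eq:
  assumes "0 \<le> t" "t < 2"
  shows "per_bound (2 * of_nat j + t) = 2 ^ j * (1 + (t/2)^2)"
proof -
  have "\<lfloor>(2 * of_nat j + t)/2\<rfloor> = int j"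
    using assms by (intro floor_unique) auto
  thus ?thesis unfolding per_bound_def by simp
qed

lemma obtain_even_plus_rest:
  fixes s :: real
  assumes "0 \<le> s"
  obtains j t where "s = 2 * of_nat j + t" "0 \<le> t" "t < 2"
proof -
  define j where "j = nat \<lfloor>s/2\<rfloor>"
  have "of_int \<lfloor>s/2\<rfloor> = real j" unfolding j_def using assms by simp
  moreover have "of_int \<lfloor>s/2\<rfloor> \<le> s/2" "s/2 < of_int \<lfloor>s/2\<rfloor> + 1" by linarith+
  ultimately show ?thesis using that[of j "s - 2 * real j"] by auto
qed

lemma per_bound_small:
  assumes "0 \<le> s" "s \<le> 2"
  shows "per_bound s = 1 + s^2/4"
proof (cases "s = 2")
  case True
  have "per_bound (2 * of_nat 1 + 0) = 2 ^ 1 * (1 + (0/2)^2)" by (rule per_bound_eq) auto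
  thus ?thesis using True by simp
next
  case False
  hence "per_bound (2 * of_nat 0 + s) = 2 ^ 0 * (1 + (s/2)^2)" using assms by (intro per_bound_eq) auto
  thus ?thesis by (simp add: power2_eq_square)
qed

lemma per_bound_ge_one:
  assumes "0 \<le> s"
  shows "1 \<le> per_bound s"
proof -
  obtain j t where "s = 2 * of_nat j + t" "0 \<le> t" "t < 2"
    using obtain_even_plus_rest assms by blast
  moreover have "1 * 1 \<le> (2::real)^j * (1 + (t/2)^2)" by (intro mult_mono) auto
  ultimately show ?thesis using per_bound_eq by simp
qed

lemma per_bound_mono:
  assumes "0 \<le> x" "x \<le> y"
  shows "per_bound x \<le> per_bound y"
proof -
  obtain j t where x: "x = 2 * of_nat j + t" "0 \<le> t" "t < 2"
    using obtain_even_plus_rest assms by blast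
  obtain j' t' where y: "y = 2 * of_nat j' + t'" "0 \<le> t'" "t' < 2"
    using obtain_even_plus_rest[of y] assms by auto
  have "j \<le> j'" using x y assms by linarith
  show ?thesis
  proof (cases "j = j'")
    case True
    hence "t/2 \<le> t'/2" using x y assms by simp
    hence "(t/2)^2 \<le> (t'/2)^2" by (rule power_mono) (use x in simp)
    thus ?thesis using x y True per_bound_eq by simp
  next
    case False
    have "(t/2)^2 \<le> 1" using x by (simp add: power_le_one)
    hence "per_bound x \<le> 2 ^ Suc j" using x per_bound_eq by simp
    also have "(2::real) ^ Suc j \<le> 2 ^ j'" using False \<open>j \<le> j'\<close> by (intro power_increasing) auto
    also have "\<dots> \<le> per_bound y" using y per_bound_eq by simp
    finally show ?thesis .
  qed
qed

lemma one_plus_sq_mult_le: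
  fixes t d :: real
  assumes "0 \<le> t" "t \<le> 2" "0 \<le> d" "d \<le> 2"
  shows "(1 + (t/2)^2) * (1 + (d/2)^2) \<le> 1 + ((t + d)/2)^2"
proof -
  have "(t * d) * (t * d) \<le> 8 * (t * d)"
    using assms mult_mono[of t 2 d 2] by (intro mult_right_mono) auto
  thus ?thesis by (simp add: power2_eq_square field_simps)
qed

text \<open>With \<open>a = 2 - t\<close> and \<open>b = 2 - d\<close>, sixteen times the difference of the two sides is
  \<open>a b (4 (a + b) - a b)\<close>.\<close>

lemma one_plus_sq_mult_le_carry:
  fixes t d :: real
  assumes "0 \<le> t" "t \<le> 2" "0 \<le> d" "d \<le> 2" "2 \<le> t + d"
  shows "(1 + (t/2)^2) * (1 + (d/2)^2) \<le> 2 * (1 + ((t + d - 2)/2)^2)"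
proof -
  define a where "a = 2 - t"
  define b where "b = 2 - d"
  have ab: "0 \<le> a" "a \<le> 2" "0 \<le> b" using assms unfolding a_def b_def by auto
  hence "a * b \<le> 2 * b" by (intro mult_right_mono) auto
  hence "a * b \<le> 4 * (a + b)" using ab by (simp add: algebra_simps)
  hence "0 \<le> a * b * (4 * (a + b) - a * b)" using ab by simp
  also have "a * b * (4 * (a + b) - a * b)
      = 16 * (2 * (1 + ((t + d - 2)/2)^2) - (1 + (t/2)^2) * (1 + (d/2)^2))"
    unfolding a_def b_def by (simp add: power2_eq_square field_simps)
  finally show ?thesis by simp
qed

lemma per_bound_super:
  assumes "0 \<le> x" "0 \<le> d" "d \<le> 2"
  shows "per_bound x * per_bound d \<le> per_bound (x + d)"
proof -
  obtain j t where x: "x = 2 * of_nat j + t" "0 \<le> t" "t < 2"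
    using obtain_even_plus_rest assms by blast
  have hx: "per_bound x = 2 ^ j * (1 + (t/2)^2)" using x per_bound_eq by simp
  have hd: "per_bound d = 1 + (d/2)^2" using per_bound_small assms by (simp add: power_divide)
  show ?thesis
  proof (cases "t + d < 2")
    case True
    have "per_bound (x + d) = per_bound (2 * of_nat j + (t + d))" using x by (simp add: algebra_simps)
    also have "\<dots> = 2 ^ j * (1 + ((t + d)/2)^2)" using True x assms by (intro per_bound_eq) auto
    finally show ?thesis
      using one_plus_sq_mult_le[of t d] x assms unfolding hx hd by simp
  next
    case False
    have "per_bound (x + d) = per_bound (2 * of_nat (Suc j) + (t + d - 2))" using x by (simp add: algebra_simps)
    also have "\<dots> = 2 ^ Suc j * (1 + ((t + d - 2)/2)^2)" using False x assms by (intro per_bound_eq) auto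
    finally show ?thesis
      using one_plus_sq_mult_le_carry[of t d] x assms False unfolding hx hd by simp
  qed
qed

definition offdiag :: "(nat \<Rightarrow> nat \<Rightarrow> real) \<Rightarrow> nat \<Rightarrow> nat \<Rightarrow> real" where
  "offdiag A i j = (if i = j then 0 else A i j)"

definition hollow_substochastic :: "nat \<Rightarrow> (nat \<Rightarrow> nat \<Rightarrow> real) \<Rightarrow> bool" where
  "hollow_substochastic n A \<longleftrightarrow> (\<forall>i<n. \<forall>j<n. 0 \<le> A i j) \<and> (\<forall>i<n. A i i = 0) \<and>
     (\<forall>i<n. (\<Sum>j<n. A i j) \<le> 1) \<and> (\<forall>j<n. (\<Sum>i<n. A i j) \<le> 1)"

lemma hollow_substochastic_offdiag:
  assumes "\<And>i j. i < n \<Longrightarrow> j < n \<Longrightarrow> 0 \<le> B i j"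
    and "\<And>i. i < n \<Longrightarrow> (\<Sum>j<n. B i j) \<le> 1" and "\<And>j. j < n \<Longrightarrow> (\<Sum>i<n. B i j) \<le> 1"
  shows "hollow_substochastic n (offdiag B)"
proof -
  have le: "offdiag B i j \<le> B i j" if "i < n" "j < n" for i j
    using assms(1) that by (simp add: offdiag_def)
  have "(\<Sum>j<n. offdiag B i j) \<le> 1" if "i < n" for i
    using sum_mono[of "{..<n}" "offdiag B i" "B i"] le assms(2) that by fastforce
  moreover have "(\<Sum>i<n. offdiag B i j) \<le> 1" if "j < n" for j
    using sum_mono[of "{..<n}" "\<lambda>i. offdiag B i j" "\<lambda>i. B i j"] le assms(3) that by fastforce
  ultimately show ?thesis
    using assms(1) unfolding hollow_substochastic_def by (simp add: offdiag_def)
qed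

lemma sum_offdiag:
  "(\<Sum>i<n. \<Sum>j<n. offdiag B i j) = (\<Sum>i<n. \<Sum>j<n. B i j) - (\<Sum>i<n. B i i)"
proof -
  have "(\<Sum>j<n. offdiag B i j) = (\<Sum>j<n. B i j) - B i i" if "i < n" for i
  proof -
    have "(\<Sum>j<n. offdiag B i j) = (\<Sum>j<n. B i j - (if i = j then B i j else 0))"
      by (rule sum.cong) (auto simp: offdiag_def)
    thus ?thesis using that by (simp add: sum_subtractf)
  qed
  thus ?thesis by (simp add: sum_subtractf)
qed

lemma per_one_plus_expand_last_row:
  assumes "A n n = 0"
  shows "per (Suc n) (\<lambda>i j. idm i j + A i j) = per n (\<lambda>i j. idm i j + A i j) +
    (\<Sum>b<n. A n b * per n (\<lambda>i l. if l = b then A i n else idm i l + A i l))"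
proof -
  let ?col = "\<lambda>b. per n (\<lambda>i l. if l = b then A i n else idm i l + A i l)"
  have col: "per n (\<lambda>i l. if l = b then idm i n + A i n else idm i l + A i l) = ?col b" for b
    by (rule per_cong) (auto simp: idm_def)
  have "per (Suc n) (\<lambda>i j. idm i j + A i j) =
      (\<Sum>b<n. (idm n b + A n b) * ?col b) + (idm n n + A n n) * ?col n"
    by (simp add: per_expand_last_row col flip: lessThan_Suc_atMost)
  also have "(\<Sum>b<n. (idm n b + A n b) * ?col b) = (\<Sum>b<n. A n b * ?col b)"
    by (intro sum.cong refl) (simp add: idm_def)
  also have "(idm n n + A n n) * ?col n = per n (\<lambda>i j. idm i j + A i j)"
    using assms by (simp add: idm_def) (rule per_cong; simp add: idm_def)
  finally show ?thesis by simp
qed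

text \<open>The last row and column \<open>v\<close>, \<open>u\<close> of \<open>A\<close> are folded into the rank-one update
  \<open>u v\<^sup>T\<close> of the leading block; the diagonal of the update is factored out row by row.\<close>

lemma per_one_plus_hollow_reduce:
  assumes "hollow_substochastic (Suc n) A"
  shows "per (Suc n) (\<lambda>i j. idm i j + A i j) \<le> (\<Prod>i<n. 1 + A i n * A n i) *
    per n (\<lambda>i j. idm i j + offdiag (\<lambda>i j. A i j + A i n * A n j) i j)"
proof -
  define u where "u i = A i n" for i
  define v where "v j = A n j" for j
  have A0: "\<And>i j. i < Suc n \<Longrightarrow> j < Suc n \<Longrightarrow> 0 \<le> A i j"
    and Ad: "\<And>i. i < Suc n \<Longrightarrow> A i i = 0"
    using assms unfolding hollow_substochastic_def by auto
  have u0: "\<And>i. i < n \<Longrightarrow> 0 \<le> u i" and v0: "\<And>i. i < n \<Longrightarrow> 0 \<le> v i"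
    unfolding u_def v_def using A0 by auto
  have "per (Suc n) (\<lambda>i j. idm i j + A i j) = per n (\<lambda>i j. idm i j + A i j) +
      (\<Sum>b<n. v b * per n (\<lambda>i l. if l = b then u i else idm i l + A i l))"
    unfolding u_def v_def using Ad by (intro per_one_plus_expand_last_row) auto
  also have "\<dots> \<le> per n (\<lambda>i l. (idm i l + A i l) + u i * v l)"
    by (rule per_rank_one_update) (auto simp: idm_def intro!: A0 u0 v0 add_nonneg_nonneg)
  also have "\<dots> \<le> per n (\<lambda>i l. (1 + u i * v i) * (idm i l + offdiag (\<lambda>i j. A i j + u i * v j) i l))"
  proof (rule per_mono)
    fix i l assume il: "i < n" "l < n"
    have "0 \<le> u i * v l" "0 \<le> u i * v i" "0 \<le> A i l" using il u0 v0 A0 by auto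
    hence "0 \<le> u i * v i * (A i l + u i * v l)" by simp
    thus "0 \<le> idm i l + A i l + u i * v l \<and>
        idm i l + A i l + u i * v l \<le> (1 + u i * v i) * (idm i l + offdiag (\<lambda>i j. A i j + u i * v j) i l)"
      using Ad[of i] il \<open>0 \<le> u i * v l\<close> \<open>0 \<le> A i l\<close>
      by (auto simp: idm_def offdiag_def distrib_right)
  qed
  also have "\<dots> = (\<Prod>i<n. 1 + u i * v i) * per n (\<lambda>i j. idm i j + offdiag (\<lambda>i j. A i j + u i * v j) i j)"
    by (rule per_scale_rows)
  finally show ?thesis unfolding u_def v_def .
qed

lemma sum_offdiag_add_rank_one:
  assumes "\<And>i. i < n \<Longrightarrow> A i i = 0"
  shows "(\<Sum>i<n. \<Sum>j<n. offdiag (\<lambda>i j. A i j + u i * v j) i j)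
    = (\<Sum>i<n. \<Sum>j<n. A i j) + (\<Sum>i<n. u i) * (\<Sum>j<n. v j) - (\<Sum>i<n. u i * v i)"
  using assms by (simp add: sum_offdiag sum.distrib sum_product)

lemma hollow_substochastic_reduce:
  assumes "hollow_substochastic (Suc n) A"
  shows "hollow_substochastic n (offdiag (\<lambda>i j. A i j + A i n * A n j))"
proof (rule hollow_substochastic_offdiag)
  have A0: "\<And>i j. i < Suc n \<Longrightarrow> j < Suc n \<Longrightarrow> 0 \<le> A i j"
    and rows: "\<And>i. i < Suc n \<Longrightarrow> (\<Sum>j<Suc n. A i j) \<le> 1"
    and cols: "\<And>j. j < Suc n \<Longrightarrow> (\<Sum>i<Suc n. A i j) \<le> 1"
    using assms unfolding hollow_substochastic_def by auto
  have last_row: "(\<Sum>j<n. A n j) \<le> 1" and last_col: "(\<Sum>i<n. A i n) \<le> 1"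
    using rows[of n] cols[of n] A0[of n n] by simp_all
  show "0 \<le> A i j + A i n * A n j" if "i < n" "j < n" for i j
    using A0 that by simp
  show "(\<Sum>j<n. A i j + A i n * A n j) \<le> 1" if i: "i < n" for i
  proof -
    have "A i n * (\<Sum>j<n. A n j) \<le> A i n"
      using last_row A0[of i n] i by (simp add: mult_left_le)
    thus ?thesis using rows[of i] i by (simp add: sum.distrib sum_distrib_left)
  qed
  show "(\<Sum>i<n. A i j + A i n * A n j) \<le> 1" if j: "j < n" for j
  proof -
    have "(\<Sum>i<n. A i n) * A n j \<le> A n j"
      using last_col A0 j by (intro mult_left_le_one_le) (auto intro: sum_nonneg)
    thus ?thesis using cols[of j] j by (simp add: sum.distrib sum_distrib_right)
  qed
qed

lemma per_bound_step:
  fixes s r c D :: real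
  assumes "0 \<le> s" "0 \<le> r" "r \<le> 1" "0 \<le> c" "c \<le> 1" "0 \<le> D" "D \<le> r * c"
  shows "(1 + D + (r * c - D)^2 / 4) * per_bound (s + r * c - D) \<le> per_bound (s + r + c)"
proof -
  define \<delta> where "\<delta> = c + r - r * c + D"
  have "r * c \<le> r" using assms by (simp add: mult_left_le)
  hence \<delta>: "0 \<le> \<delta>" "\<delta> \<le> 2" unfolding \<delta>_def using assms by auto
  have x: "0 \<le> s + r * c - D" using assms by simp
  have "1 + D + (r * c - D)^2 / 4 \<le> per_bound \<delta>"
    using quadratic_bound_le_square[OF assms(2-7)] per_bound_small[OF \<delta>] unfolding \<delta>_def by simp
  hence "(1 + D + (r * c - D)^2 / 4) * per_bound (s + r * c - D) \<le> per_bound \<delta> * per_bound (s + r * c - D)"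
    using per_bound_ge_one[OF x] by (intro mult_right_mono) auto
  also have "\<dots> \<le> per_bound (s + r * c - D + \<delta>)"
    using per_bound_super[OF x \<delta>] by (simp add: mult.commute)
  also have "s + r * c - D + \<delta> = s + r + c" unfolding \<delta>_def by simp
  finally show ?thesis .
qed

lemma per_one_plus_hollow_le:
  "hollow_substochastic n A \<Longrightarrow> per n (\<lambda>i j. idm i j + A i j) \<le> per_bound (\<Sum>i<n. \<Sum>j<n. A i j)"
proof (induction n arbitrary: A)
  case 0
  show ?case by (simp add: per_bound_small)
next
  case (Suc n)
  define u where "u i = A i n" for i
  define v where "v j = A n j" for j
  define c r D where "c = (\<Sum>i<n. u i)" and "r = (\<Sum>j<n. v j)" and "D = (\<Sum>i<n. u i * v i)"
  have A0: "\<And>i j. i < Suc n \<Longrightarrow> j < Suc n \<Longrightarrow> 0 \<le> A i j"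
    and Ad: "\<And>i. i < Suc n \<Longrightarrow> A i i = 0"
    and rows: "\<And>i. i < Suc n \<Longrightarrow> (\<Sum>j<Suc n. A i j) \<le> 1"
    and cols: "\<And>j. j < Suc n \<Longrightarrow> (\<Sum>i<Suc n. A i j) \<le> 1"
    using Suc.prems unfolding hollow_substochastic_def by auto
  have u0: "\<And>i. i < n \<Longrightarrow> 0 \<le> u i" and v0: "\<And>i. i < n \<Longrightarrow> 0 \<le> v i"
    unfolding u_def v_def using A0 by auto
  have c: "0 \<le> c" "c \<le> 1" and r: "0 \<le> r" "r \<le> 1"
    using cols[of n] rows[of n] Ad[of n] u0 v0
    unfolding c_def r_def D_def u_def v_def by (auto intro: sum_nonneg)
  have D: "0 \<le> D" "D \<le> r * c"
    using sum_mult_le_mult_sum[of n u v] u0 v0 unfolding c_def r_def D_def by (auto intro: sum_nonneg simp: mult.commute)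
  have S: "0 \<le> (\<Sum>i<n. \<Sum>j<n. A i j)" using A0 by (auto intro!: sum_nonneg)
  have "per (Suc n) (\<lambda>i j. idm i j + A i j) \<le> (\<Prod>i<n. 1 + u i * v i) *
      per n (\<lambda>i j. idm i j + offdiag (\<lambda>i j. A i j + u i * v j) i j)"
    unfolding u_def v_def by (rule per_one_plus_hollow_reduce[OF Suc.prems])
  also have "\<dots> \<le> (\<Prod>i<n. 1 + u i * v i) * per_bound ((\<Sum>i<n. \<Sum>j<n. A i j) + r * c - D)"
  proof (rule mult_left_mono)
    have "hollow_substochastic n (offdiag (\<lambda>i j. A i j + u i * v j))"
      unfolding u_def v_def by (rule hollow_substochastic_reduce[OF Suc.prems])
    from Suc.IH[OF this]
    show "per n (\<lambda>i j. idm i j + offdiag (\<lambda>i j. A i j + u i * v j) i j)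
        \<le> per_bound ((\<Sum>i<n. \<Sum>j<n. A i j) + r * c - D)"
      using Ad by (simp add: sum_offdiag_add_rank_one c_def r_def D_def mult.commute)
  qed (use u0 v0 in \<open>auto intro!: prod_nonneg add_nonneg_nonneg\<close>)
  also have "\<dots> \<le> (1 + D + (r * c - D)^2 / 4) * per_bound ((\<Sum>i<n. \<Sum>j<n. A i j) + r * c - D)"
  proof (rule mult_right_mono)
    show "(\<Prod>i<n. 1 + u i * v i) \<le> 1 + D + (r * c - D)^2 / 4"
      using prod_one_plus_mult_le[of n u v, OF u0 v0] c r unfolding c_def r_def D_def by simp
    show "0 \<le> per_bound ((\<Sum>i<n. \<Sum>j<n. A i j) + r * c - D)"
      using per_bound_ge_one[of "(\<Sum>i<n. \<Sum>j<n. A i j) + r * c - D"] S D by simp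
  qed
  also have "\<dots> \<le> per_bound ((\<Sum>i<n. \<Sum>j<n. A i j) + r + c)"
    using per_bound_step[OF S r c D] .
  also have "(\<Sum>i<n. \<Sum>j<n. A i j) + r + c = (\<Sum>i<Suc n. \<Sum>j<Suc n. A i j)"
    using Ad[of n] unfolding c_def r_def D_def u_def v_def by (simp add: sum.distrib)
  finally show ?case .
qed

lemma per_I_minus_le_per_bound:
  assumes "doubly_substochastic n A"
  shows "per n (\<lambda>i j. idm i j - A i j) \<le> per_bound (sigma_sum n A)"
proof -
  have A0: "\<And>i j. i < n \<Longrightarrow> j < n \<Longrightarrow> 0 \<le> A i j"
    and rows: "\<And>i. i < n \<Longrightarrow> (\<Sum>j<n. A i j) \<le> 1"
    and cols: "\<And>j. j < n \<Longrightarrow> (\<Sum>i<n. A i j) \<le> 1"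
    using assms unfolding doubly_substochastic_def by auto
  have diag_le: "A i i \<le> 1" if "i < n" for i
    using member_le_sum[of i "{..<n}" "A i"] rows[of i] A0 that by auto
  have "per n (\<lambda>i j. idm i j - A i j) \<le> per n (\<lambda>i j. idm i j + offdiag A i j)"
    by (rule per_le_of_abs_le) (use A0 diag_le in \<open>auto simp: idm_def offdiag_def\<close>)
  also have "\<dots> \<le> per_bound (\<Sum>i<n. \<Sum>j<n. offdiag A i j)"
    by (intro per_one_plus_hollow_le hollow_substochastic_offdiag A0 rows cols)
  also have "\<dots> \<le> per_bound (sigma_sum n A)"
  proof (rule per_bound_mono)
    show "0 \<le> (\<Sum>i<n. \<Sum>j<n. offdiag A i j)"
      using A0 by (auto simp: offdiag_def intro!: sum_nonneg)
    show "(\<Sum>i<n. \<Sum>j<n. offdiag A i j) \<le> sigma_sum n A"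
      using A0 by (simp add: sum_offdiag sigma_sum_def) (auto intro: sum_nonneg)
  qed
  finally show ?thesis .
qed

lemma sigma_sum_lt_of_omega:
  assumes "A \<in> omega n k" "k \<le> n"
  shows "sigma_sum n A < real (n - k + 1)"
proof -
  have "\<lceil>real n - sigma_sum n A\<rceil> = int k"
    using assms(1) unfolding omega_def sub_defect_def by simp
  hence "real k - 1 < real n - sigma_sum n A" by linarith
  thus ?thesis using assms(2) by (simp add: of_nat_diff)
qed

lemma per_I_minus_omega_le:
  assumes "A \<in> omega n k" "k \<le> n"
  shows "per n (\<lambda>i j. idm i j - A i j) \<le> per_bound (real (n - k + 1))"
proof -
  have "doubly_substochastic n A" using assms(1) unfolding omega_def by simp
  moreover from this have "0 \<le> sigma_sum n A"
    unfolding doubly_substochastic_def sigma_sum_def by (auto intro!: sum_nonneg)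
  ultimately show ?thesis
    using per_I_minus_le_per_bound per_bound_mono sigma_sum_lt_of_omega[OF assms]
    by (meson less_imp_le order_trans)
qed

text \<open>\<open>pair_blocks w L\<close> is the block diagonal matrix with \<open>2 \<times> 2\<close> blocks \<open>[[0, w b], [w b, 0]]\<close> in rows \<open>2b, 2b + 1 < L\<close> and zeros elsewhere.\<close>

definition pair_blocks :: "(nat \<Rightarrow> real) \<Rightarrow> nat \<Rightarrow> nat \<Rightarrow> nat \<Rightarrow> real" where
  "pair_blocks w L i j = (if i < L \<and> j < L \<and> i \<noteq> j \<and> i div 2 = j div 2 then w (i div 2) else 0)"

lemma per_two_by_two_block:
  assumes "M n n = 1" "M n (Suc n) = - x" "M (Suc n) n = - y" "M (Suc n) (Suc n) = 1"
    and "\<And>i. i < n \<Longrightarrow> M i n = 0 \<and> M i (Suc n) = 0"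
    and "\<And>l. l < n \<Longrightarrow> M n l = 0 \<and> M (Suc n) l = 0"
  shows "per (Suc (Suc n)) M = (1 + x * y) * per n M"
proof -
  define F where "F b = M (Suc n) b * per (Suc n) (\<lambda>i l. if l = b then M i (Suc n) else M i l)" for b
  have "per (Suc (Suc n)) M = (\<Sum>b<n. F b) + F n + F (Suc n)"
    unfolding F_def per_expand_last_row by (simp add: lessThan_Suc_atMost[symmetric])
  also have "(\<Sum>b<n. F b) = 0" unfolding F_def using assms(6) by simp
  also have "F (Suc n) = per n M"
  proof -
    have "per (Suc n) (\<lambda>i l. if l = Suc n then M i (Suc n) else M i l) = per (Suc n) M"
      by (rule per_cong) auto
    thus ?thesis unfolding F_def using assms(1,4,6) by (simp add: per_last_row_diagonal)
  qed
  also have "F n = x * y * per n M"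
  proof -
    have "per n (\<lambda>i l. if l = n then M i (Suc n) else M i l) = per n M"
      by (rule per_cong) auto
    thus ?thesis unfolding F_def using assms(2,3,6) by (simp add: per_last_row_diagonal)
  qed
  finally show ?thesis by (simp add: algebra_simps)
qed

lemma per_I_minus_pair_blocks:
  "2 * P \<le> L \<Longrightarrow> per (2 * P) (\<lambda>i j. idm i j - pair_blocks w L i j) = (\<Prod>b<P. 1 + (w b)^2)"
proof (induction P)
  case 0
  then show ?case by simp
next
  case (Suc P)
  have L: "Suc (2 * P) < L" using Suc.prems by simp
  have "per (Suc (Suc (2 * P))) (\<lambda>i j. idm i j - pair_blocks w L i j)
      = (1 + w P * w P) * per (2 * P) (\<lambda>i j. idm i j - pair_blocks w L i j)"
    by (rule per_two_by_two_block) (use L in \<open>auto simp: idm_def pair_blocks_def\<close>)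
  thus ?case using Suc by (simp add: power2_eq_square mult.commute)
qed

lemma per_I_minus_pair_blocks_pad:
  "per (L + q) (\<lambda>i j. idm i j - pair_blocks w L i j) = per L (\<lambda>i j. idm i j - pair_blocks w L i j)"
proof (induction q)
  case 0
  then show ?case by simp
next
  case (Suc q)
  have "per (Suc (L + q)) (\<lambda>i j. idm i j - pair_blocks w L i j) =
      (idm (L + q) (L + q) - pair_blocks w L (L + q) (L + q)) * per (L + q) (\<lambda>i j. idm i j - pair_blocks w L i j)"
    by (rule per_last_row_diagonal) (auto simp: idm_def pair_blocks_def)
  thus ?case using Suc.IH by (simp add: idm_def pair_blocks_def)
qed

lemma same_pair_iff:
  fixes i j P :: nat
  assumes "i < 2 * P"
  shows "(j < 2 * P \<and> i \<noteq> j \<and> i div 2 = j div 2) \<longleftrightarrow> j = (if even i then i + 1 else i - 1)"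
proof -
  have halves: "j div 2 = a \<longleftrightarrow> j = 2 * a \<or> j = 2 * a + 1" for a by auto
  show ?thesis
  proof (cases "even i")
    case True
    then obtain a where "i = 2 * a" by blast
    thus ?thesis using assms by (auto simp: halves)
  next
    case False
    then obtain a where "i = 2 * a + 1" using oddE by blast
    thus ?thesis using assms by (auto simp: halves)
  qed
qed

lemma sum_row_pair_blocks:
  assumes "2 * P \<le> n" "i < n"
  shows "(\<Sum>j<n. pair_blocks w (2 * P) i j) = (if i < 2 * P then w (i div 2) else 0)"
proof (cases "i < 2 * P")
  case True
  define partner where "partner = (if even i then i + 1 else i - 1)"
  have partner: "(j < 2 * P \<and> i \<noteq> j \<and> i div 2 = j div 2) \<longleftrightarrow> j = partner" for j
    unfolding partner_def using True by (rule same_pair_iff)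
  have "pair_blocks w (2 * P) i j = (if j = partner then w (i div 2) else 0)" for j
    using partner[of j] True unfolding pair_blocks_def by (simp del: partner)
  hence "(\<Sum>j<n. pair_blocks w (2 * P) i j) = (\<Sum>j<n. if j = partner then w (i div 2) else 0)"
    by simp
  also have "\<dots> = w (i div 2)" using partner[of partner] assms by simp
  finally show ?thesis using True by simp
qed (simp add: pair_blocks_def)

lemma pair_blocks_sym: "pair_blocks w L i j = pair_blocks w L j i"
  unfolding pair_blocks_def by auto

lemma doubly_substochastic_pair_blocks:
  assumes "2 * P \<le> n" "\<And>b. 0 \<le> w b" "\<And>b. w b \<le> 1"
  shows "doubly_substochastic n (pair_blocks w (2 * P))"
proof -
  have rows: "(\<Sum>j<n. pair_blocks w (2 * P) i j) \<le> 1" if "i < n" for i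
    using sum_row_pair_blocks[OF assms(1) that] assms(3) by simp
  moreover have "(\<Sum>i<n. pair_blocks w (2 * P) i j) \<le> 1" if "j < n" for j
    using rows[OF that] by (simp add: pair_blocks_sym[of w _ _ j])
  ultimately show ?thesis
    using assms unfolding doubly_substochastic_def pair_blocks_def by auto
qed

lemma sum_div_2:
  fixes f :: "nat \<Rightarrow> real"
  shows "(\<Sum>i<2 * P. f (i div 2)) = 2 * (\<Sum>b<P. f b)"
  by (induction P) simp_all

lemma sigma_sum_pair_blocks:
  assumes "2 * P \<le> n"
  shows "sigma_sum n (pair_blocks w (2 * P)) = 2 * (\<Sum>b<P. w b)"
proof -
  have "sigma_sum n (pair_blocks w (2 * P)) = (\<Sum>i<n. if i \<in> {..<2 * P} then w (i div 2) else 0)"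
    unfolding sigma_sum_def by (intro sum.cong refl) (simp add: sum_row_pair_blocks[OF assms])
  also have "\<dots> = (\<Sum>i\<in>{..<n} \<inter> {..<2 * P}. w (i div 2))" by (simp add: sum.inter_restrict)
  also have "{..<n} \<inter> {..<2 * P} = {..<2 * P}" using assms by auto
  finally show ?thesis by (simp add: sum_div_2)
qed

lemma omega_pair_blocks_witness:
  fixes n k p r :: nat and t :: real
  assumes fits: "2 * (p + r) \<le> n" and m: "n - k + 1 = 2 * p + r" "k \<le> n"
    and t: "0 \<le> t" "t < 1" "real (n - k + 1) - 1 \<le> real (n - k + 1) * t"
  shows "\<exists>A\<in>omega n k. per n (\<lambda>i j. idm i j - A i j) = (1 + t^2)^p * (1 + (t/2)^2)^r"
proof
  define w where "w b = (if b < p then t else t / 2)" for b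
  define A where "A = pair_blocks w (2 * (p + r))"
  have "doubly_substochastic n A"
    unfolding A_def using fits t by (intro doubly_substochastic_pair_blocks) (auto simp: w_def)
  moreover have "sub_defect n A = int k"
  proof -
    have "(\<Sum>b<p + r. w b) = real p * t + real r * (t / 2)"
      unfolding w_def by (induction r) (simp_all add: algebra_simps)
    hence "sigma_sum n A = real (n - k + 1) * t"
      unfolding A_def sigma_sum_pair_blocks[OF fits] m by (simp add: algebra_simps)
    moreover have "real (n - k + 1) * t < real (n - k + 1)" using t by simp
    moreover have "real (n - k + 1) = real n - real k + 1" using m(2) by (simp add: of_nat_diff)
    moreover have "real_of_int (int k) = real k" by simp
    ultimately show ?thesis
      unfolding sub_defect_def using t(3) by (intro ceiling_unique) linarith+
  qed
  ultimately show "A \<in> omega n k" unfolding omega_def by simp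
  have "per n (\<lambda>i j. idm i j - A i j) = per (2 * (p + r)) (\<lambda>i j. idm i j - A i j)"
    using per_I_minus_pair_blocks_pad[of "2 * (p + r)" "n - 2 * (p + r)" w] fits
    unfolding A_def by simp
  also have "\<dots> = (\<Prod>b<p + r. 1 + (w b)^2)" unfolding A_def by (rule per_I_minus_pair_blocks) simp
  also have "\<dots> = (1 + t^2)^p * (1 + (t/2)^2)^r"
    unfolding w_def by (induction r) simp_all
  finally show "per n (\<lambda>i j. idm i j - A i j) = (1 + t^2)^p * (1 + (t/2)^2)^r" .
qed

lemma eventually_pair_blocks_value:
  fixes n k p r :: nat
  assumes "2 * (p + r) \<le> n" "n - k + 1 = 2 * p + r" "k \<le> n"
  shows "eventually (\<lambda>t. (1 + t^2)^p * (1 + (t/2)^2)^r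
    \<in> {per n (\<lambda>i j. idm i j - A i j) | A. A \<in> omega n k}) (at_left 1)"
proof -
  define m where "m = real (n - k + 1)"
  have "0 \<le> (m - 1) / m" "(m - 1) / m < 1" unfolding m_def by (simp_all add: field_simps)
  hence "eventually (\<lambda>t. t \<in> {(m - 1) / m <..< 1}) (at_left 1)"
    by (intro eventually_at_left_real)
  thus ?thesis
  proof (rule eventually_mono)
    fix t assume "t \<in> {(m - 1) / m <..< 1}"
    hence t: "(m - 1) / m < t" "t < 1" by auto
    have "0 \<le> t" using t \<open>0 \<le> (m - 1) / m\<close> by linarith
    moreover have "0 < m" unfolding m_def by simp
    ultimately have "0 \<le> t" "t < 1" "m - 1 \<le> m * t"
      using t by (simp_all add: pos_divide_less_eq mult.commute)
    then obtain A where "A \<in> omega n k" "per n (\<lambda>i j. idm i j - A i j) = (1 + t^2)^p * (1 + (t/2)^2)^r"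
      using omega_pair_blocks_witness[OF assms] unfolding m_def by blast
    thus "(1 + t^2)^p * (1 + (t/2)^2)^r \<in> {per n (\<lambda>i j. idm i j - A i j) | A. A \<in> omega n k}"
      by force
  qed
qed

lemma cSup_eq_of_eventually_tendsto:
  fixes S :: "real set"
  assumes upper: "\<And>x. x \<in> S \<Longrightarrow> x \<le> V"
    and "eventually (\<lambda>t. f t \<in> S) F" "F \<noteq> bot" "(f \<longlongrightarrow> V) F"
  shows "Sup S = V"
proof (rule antisym)
  have "S \<noteq> {}" using eventually_happens'[OF assms(3,2)] by auto
  thus "Sup S \<le> V" using upper by (rule cSup_least)
  have "bdd_above S" using upper by (rule bdd_aboveI)
  hence "eventually (\<lambda>t. f t \<le> Sup S) F"
    using assms(2) by (auto elim!: eventually_mono intro: cSup_upper)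
  thus "V \<le> Sup S" using assms(3,4) tendsto_upperbound by blast
qed

theorem mainTheorem14:
  fixes n k e :: nat
  assumes "1 \<le> n" and "1 \<le> k" and "k \<le> n"
    and "even n \<or> (odd n \<and> 2 \<le> k)"
    and "even e" and "e \<le> n - k + 1" and "n - k + 1 < e + 2"
  shows "Sup {per n (\<lambda>i j. idm i j - A i j) | A. A \<in> omega n k}
         = 2 ^ (e div 2) * (1 + ((real (n - k + 1) - real e) / 2)\<^sup>2)"
proof -
  define p r where "p = e div 2" and "r = n - k + 1 - e"
  have e: "e = 2 * p" and m: "n - k + 1 = 2 * p + r" and "r \<le> 1"
    using assms(5-7) unfolding p_def r_def by auto
  have fits: "2 * (p + r) \<le> n"
  proof (cases "r = 0")
    case False
    hence "r = 1" using \<open>r \<le> 1\<close> by simp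
    have "k \<noteq> 1"
    proof
      assume "k = 1"
      hence "n = 2 * p + 1" using m \<open>r = 1\<close> assms(1) by simp
      thus False using assms(4) \<open>k = 1\<close> by simp
    qed
    thus ?thesis using m assms(2,3) \<open>r = 1\<close> by simp
  qed (use m assms(2,3) in simp)
  have at_one: "2 ^ p * (1 + (real r / 2)^2) = (1 + 1^2)^p * (1 + (1/2)^2)^r"
    using \<open>r \<le> 1\<close> by (cases r) (simp_all add: power2_eq_square)
  have bound: "per_bound (real (n - k + 1)) = 2 ^ p * (1 + (real r / 2)^2)"
    using per_bound_eq[of "real r" p] m \<open>r \<le> 1\<close> by simp
  have "Sup {per n (\<lambda>i j. idm i j - A i j) | A. A \<in> omega n k} = 2 ^ p * (1 + (real r / 2)^2)"
  proof (rule cSup_eq_of_eventually_tendsto)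
    show "x \<le> 2 ^ p * (1 + (real r / 2)^2)" if "x \<in> {per n (\<lambda>i j. idm i j - A i j) | A. A \<in> omega n k}" for x
      using that per_I_minus_omega_le[OF _ assms(3)] unfolding bound by blast
    show "((\<lambda>t. (1 + t^2)^p * (1 + (t/2)^2)^r) \<longlongrightarrow> 2 ^ p * (1 + (real r / 2)^2)) (at_left 1)"
      unfolding at_one by (intro tendsto_intros) simp
  qed (use eventually_pair_blocks_value[OF fits m assms(3)] in auto)
  thus ?thesis using e m by simp
qed

end
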